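(* Let $\alpha,\beta\in\mathbb{C}$ with $(\alpha,\beta)\notin\mathbb{Z}^2$. Then $\mathrm{H}^1(\mathcal{W},\mathcal{F}_\alpha\otimes\mathcal{F}_\beta)=0$ if $\alpha+\beta\neq 1$, and if $\alpha+\beta=1$ then $\mathrm{H}^1(\mathcal{W},\mathcal{F}_{1-\beta}\otimes\mathcal{F}_\beta)$ is one-dimensional, spanned by the class of the 1-cocycle $\mathrm{d}_{1-\beta,\beta}$ defined by $$\mathrm{d}_{1-\beta,\beta}(L_n)=\begin{cases}\sum_{i=0}^{n-1}(i-n\beta)v_i\otimes v_{n-i},&n\geq1;\\ 0,&n=0;\\ -\sum_{i=n}^{-1}(i-n\beta)v_i\otimes v_{n-i},&n\leq -1.\end{cases}$$
   Context: The Witt algebra $\mathcal{W}$ is the complex Lie algebra with basis $\{L_n\mid n\in\mathbb{Z}\}$ and bracket $[L_m,L_n]=(m-n)L_{m+n}$. For $\alpha\in\mathbb{C}$, the tensor density module $\mathcal{F}_\alpha$ has basis $\{v_n\mid n\in\mathbb{Z}\}$ with $L_m\cdot v_n=-(\alpha m+n)v_{m+n}$. The tensor product $\mathcal{F}_\alpha\otimes\mathcal{F}_\beta$ is a $\mathcal{W}$-module via $L_m\cdot(v_i\otimes v_j)=-(i+\alpha m)v_{m+i}\otimes v_j-(j+\beta m)v_i\otimes v_{m+j}$. For a Lie algebra $L$ and $L$-module $M$, $\mathrm{Der}(L,M)$ is the space of 1-cocycles (linear $d:L\to M$ with $d([x,y])=x\cdot d(y)-y\cdot d(x)$), $\mathrm{Inn}(L,M)$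 the space of 1-coboundaries $d_v(x)=x\cdot v$ ($v\in M$), and $\mathrm{H}^1(L,M)=\mathrm{Der}(L,M)/\mathrm{Inn}(L,M)$. *)

theory Defs
  imports Complex_Main
begin

text \<open>Elements of F_alpha tensor F_beta: finitely supported coefficient functions
  u, where u(i,j) is the coefficient of v_i tensor v_j.\<close>
definition fin_supp :: "(int \<times> int \<Rightarrow> complex) \<Rightarrow> bool" where
  "fin_supp u \<longleftrightarrow> finite {p. u p \<noteq> 0}"

text \<open>Action of L_m on F_alpha tensor F_beta:
  L_m (v_i tensor v_j) = -(i + alpha m) v_(m+i) tensor v_j - (j + beta m) v_i tensor v_(m+j).
  Coefficient of v_a tensor v_b in L_m u.\<close>
definition act :: "complex \<Rightarrow> complex \<Rightarrow> int \<Rightarrow> (int \<times> int \<Rightarrow> complex) \<Rightarrow> (int \<times> int \<Rightarrow> complex)" where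
  "act \<alpha> \<beta> m u = (\<lambda>(a, b).
      - (of_int (a - m) + \<alpha> * of_int m) * u (a - m, b)
      - (of_int (b - m) + \<beta> * of_int m) * u (a, b - m))"

text \<open>A linear map d : W \<rightarrow> M is determined by its values D n = d(L_n) on the basis.
  It is a 1-cocycle iff d([L_m,L_n]) = L_m d(L_n) - L_n d(L_m) for all m, n
  (by bilinearity this is equivalent to the cocycle identity on all of W).\<close>
definition is_der :: "complex \<Rightarrow> complex \<Rightarrow> (int \<Rightarrow> int \<times> int \<Rightarrow> complex) \<Rightarrow> bool" where
  "is_der \<alpha> \<beta> D \<longleftrightarrow> (\<forall>n. fin_supp (D n)) \<and>
     (\<forall>m n. (\<lambda>p. of_int (m - n) * D (m + n) p) = (\<lambda>p. act \<alpha> \<beta> m (D n) p - act \<alpha> \<beta> n (D m) p))"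

definition is_inner :: "complex \<Rightarrow> complex \<Rightarrow> (int \<Rightarrow> int \<times> int \<Rightarrow> complex) \<Rightarrow> bool" where
  "is_inner \<alpha> \<beta> D \<longleftrightarrow> (\<exists>v. fin_supp v \<and> (\<forall>n. D n = act \<alpha> \<beta> n v))"

definition dcoc :: "complex \<Rightarrow> int \<Rightarrow> int \<times> int \<Rightarrow> complex" where
  "dcoc \<beta> n = (\<lambda>(a, b).
     if n \<ge> 1 then (if 0 \<le> a \<and> a \<le> n - 1 \<and> b = n - a then of_int a - of_int n * \<beta> else 0)
     else if n = 0 then 0
     else (if n \<le> a \<and> a \<le> -1 \<and> b = n - a then - (of_int a - of_int n * \<beta>) else 0))"

end

theory Submission
  imports Defs
begin

text \<open>
  \<open>L\<^sub>0\<close> acts on \<open>v\<^sub>a \<otimes> v\<^sub>b\<close> by the scalar \<open>-(a + b)\<close>, so after subtracting a coboundary a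
  cocycle \<open>d\<close> is homogeneous and kills \<open>L\<^sub>0\<close>. Since \<open>(\<alpha>, \<beta>) \<notin> \<int>\<^sup>2\<close>, \<open>L\<^sub>1\<close> and \<open>L\<^sub>-\<^sub>1\<close> act
  injectively (look at an extreme index of the support), so such a cocycle is determined by
  \<open>d(L\<^sub>0)\<close> and \<open>d(L\<^sub>1)\<close>. Modulo \<open>L\<^sub>1\<close> applied to weight-zero vectors, the weight-one space is
  spanned by any single \<open>v\<^sub>K \<otimes> v\<^sub>1\<^sub>-\<^sub>K\<close>, so we may take \<open>d(L\<^sub>1) = c v\<^sub>K \<otimes> v\<^sub>1\<^sub>-\<^sub>K\<close>.
  The cocycle identities for \<open>[L\<^sub>1, L\<^sub>-\<^sub>1]\<close> and \<open>[L\<^sub>-\<^sub>1, L\<^sub>2]\<close> force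
  \<open>c (\<alpha> - \<beta>) (\<alpha> + \<beta> - 1) = 0\<close> and, if \<open>\<alpha> = \<beta>\<close>, \<open>c \<beta> (\<beta> - 1) (2\<beta> - 1) = 0\<close>; hence \<open>c = 0\<close>
  unless \<open>\<alpha> + \<beta> = 1\<close>. In that case \<open>d\<^sub>1\<^sub>-\<^sub>\<beta>\<^sub>,\<^sub>\<beta>(L\<^sub>1) = -\<beta> v\<^sub>0 \<otimes> v\<^sub>1\<close> realises the class, and
  \<open>d\<^sub>1\<^sub>-\<^sub>\<beta>\<^sub>,\<^sub>\<beta>\<close> is not a coboundary because the supports of its values are unbounded.
\<close>

definition cocycle :: "complex \<Rightarrow> complex \<Rightarrow> (int \<Rightarrow> int \<times> int \<Rightarrow> complex) \<Rightarrow> bool" where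
  "cocycle \<alpha> \<beta> D \<longleftrightarrow>
     (\<forall>m n p. of_int (m - n) * D (m + n) p = act \<alpha> \<beta> m (D n) p - act \<alpha> \<beta> n (D m) p)"

lemma is_der_iff_cocycle: "is_der \<alpha> \<beta> D \<longleftrightarrow> (\<forall>n. fin_supp (D n)) \<and> cocycle \<alpha> \<beta> D"
  unfolding is_der_def cocycle_def fun_eq_iff by auto

lemma cocycleD:
  "cocycle \<alpha> \<beta> D \<Longrightarrow> of_int (m - n) * D (m + n) p = act \<alpha> \<beta> m (D n) p - act \<alpha> \<beta> n (D m) p"
  unfolding cocycle_def by blast

lemma act_apply:
  "act \<alpha> \<beta> m u (a, b) =
     - (of_int (a - m) + \<alpha> * of_int m) * u (a - m, b) - (of_int (b - m) + \<beta> * of_int m) * u (a, b - m)"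
  by (simp add: act_def)

lemma act_0_apply: "act \<alpha> \<beta> 0 u (a, b) = - of_int (a + b) * u (a, b)"
  by (simp add: act_apply algebra_simps)

lemma act_zero: "act \<alpha> \<beta> m (\<lambda>_. 0) = (\<lambda>_. 0)"
  by (auto simp: act_apply)

lemma act_add: "act \<alpha> \<beta> m (\<lambda>p. u p + v p) p = act \<alpha> \<beta> m u p + act \<alpha> \<beta> m v p"
  by (cases p) (simp add: act_apply algebra_simps)

lemma act_diff: "act \<alpha> \<beta> m (\<lambda>p. u p - v p) p = act \<alpha> \<beta> m u p - act \<alpha> \<beta> m v p"
  by (cases p) (simp add: act_apply algebra_simps)

lemma act_smult: "act \<alpha> \<beta> m (\<lambda>p. c * u p) p = c * act \<alpha> \<beta> m u p"
  by (cases p) (simp add: act_apply algebra_simps)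

lemma act_commutator:
  "act \<alpha> \<beta> m (act \<alpha> \<beta> n v) p - act \<alpha> \<beta> n (act \<alpha> \<beta> m v) p = of_int (m - n) * act \<alpha> \<beta> (m + n) v p"
proof (cases p)
  case (Pair a b)
  have "a - m - n = a - (m + n)" "a - n - m = a - (m + n)" "b - m - n = b - (m + n)" "b - n - m = b - (m + n)"
    by auto
  then show ?thesis unfolding Pair act_apply by (simp add: algebra_simps)
qed

lemma act_swap: "act \<alpha> \<beta> m (\<lambda>(a, b). u (b, a)) (a, b) = act \<beta> \<alpha> m u (b, a)"
  by (simp add: act_apply algebra_simps)

lemma act_flip: "act \<alpha> \<beta> m (\<lambda>(a, b). u (- a, - b)) (a, b) = - act \<alpha> \<beta> (- m) u (- a, - b)"
  by (simp add: act_apply algebra_simps)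

lemma cocycle_act: "cocycle \<alpha> \<beta> (\<lambda>n. act \<alpha> \<beta> n v)"
  unfolding cocycle_def by (simp add: act_commutator)

lemma cocycle_diff:
  assumes "cocycle \<alpha> \<beta> D" and "cocycle \<alpha> \<beta> E"
  shows "cocycle \<alpha> \<beta> (\<lambda>n p. D n p - E n p)"
  unfolding cocycle_def
proof (intro allI)
  fix m n p
  show "of_int (m - n) * (D (m + n) p - E (m + n) p) =
      act \<alpha> \<beta> m (\<lambda>p. D n p - E n p) p - act \<alpha> \<beta> n (\<lambda>p. D m p - E m p) p"
    using cocycleD[OF assms(1), of m n p] cocycleD[OF assms(2), of m n p]
    by (simp add: act_diff right_diff_distrib)
qed

lemma cocycle_smult:
  assumes "cocycle \<alpha> \<beta> D"
  shows "cocycle \<alpha> \<beta> (\<lambda>n p. c * D n p)"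
  unfolding cocycle_def
proof (intro allI)
  fix m n p
  show "of_int (m - n) * (c * D (m + n) p) = act \<alpha> \<beta> m (\<lambda>p. c * D n p) p - act \<alpha> \<beta> n (\<lambda>p. c * D m p) p"
    using arg_cong[OF cocycleD[OF assms, of m n p], of "(*) c"] by (simp add: act_smult algebra_simps)
qed

lemma fin_supp_act:
  assumes "fin_supp u"
  shows "fin_supp (act \<alpha> \<beta> m u)"
proof -
  let ?S = "{p. u p \<noteq> 0}"
  have "{p. act \<alpha> \<beta> m u p \<noteq> 0} \<subseteq> (\<lambda>(a, b). (a + m, b)) ` ?S \<union> (\<lambda>(a, b). (a, b + m)) ` ?S"
  proof
    fix p assume "p \<in> {p. act \<alpha> \<beta> m u p \<noteq> 0}"
    moreover obtain a b where p: "p = (a, b)" by fastforce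
    ultimately have "u (a - m, b) \<noteq> 0 \<or> u (a, b - m) \<noteq> 0" by (auto simp: act_apply)
    then show "p \<in> (\<lambda>(a, b). (a + m, b)) ` ?S \<union> (\<lambda>(a, b). (a, b + m)) ` ?S"
      unfolding p by (auto intro: image_eqI[of _ _ "(a - m, b)"] image_eqI[of _ _ "(a, b - m)"])
  qed
  with assms show ?thesis
    unfolding fin_supp_def by (meson finite_UnI finite_imageI finite_subset)
qed

lemma fin_supp_add: "fin_supp u \<Longrightarrow> fin_supp v \<Longrightarrow> fin_supp (\<lambda>p. u p + v p)"
  unfolding fin_supp_def by (rule finite_subset[of _ "{p. u p \<noteq> 0} \<union> {p. v p \<noteq> 0}"]) auto

lemma fin_supp_diff: "fin_supp u \<Longrightarrow> fin_supp v \<Longrightarrow> fin_supp (\<lambda>p. u p - v p)"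
  unfolding fin_supp_def by (rule finite_subset[of _ "{p. u p \<noteq> 0} \<union> {p. v p \<noteq> 0}"]) auto

lemma fin_supp_smult: "fin_supp u \<Longrightarrow> fin_supp (\<lambda>p. c * u p)"
  unfolding fin_supp_def by (rule finite_subset[of _ "{p. u p \<noteq> 0}"]) auto

lemma fin_supp_reindex: "fin_supp u \<Longrightarrow> inj f \<Longrightarrow> fin_supp (\<lambda>p. u (f p))"
  unfolding fin_supp_def using finite_vimageI[of "{p. u p \<noteq> 0}" f] by (simp add: vimage_def)

section \<open>Injectivity of \<open>L\<^sub>1\<close> and \<open>L\<^sub>-\<^sub>1\<close>\<close>

lemma act_one_kernel_Ints:
  assumes "fin_supp u" and "act \<alpha> \<beta> 1 u = (\<lambda>_. 0)" and "u p \<noteq> 0"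
  shows "\<alpha> \<in> \<int>"
proof -
  define A where "A = Max (fst ` {p. u p \<noteq> 0})"
  have fin: "finite (fst ` {p. u p \<noteq> 0})" using assms(1) by (simp add: fin_supp_def)
  moreover have "fst p \<in> fst ` {p. u p \<noteq> 0}" using assms(3) by simp
  ultimately have "A \<in> fst ` {p. u p \<noteq> 0}" unfolding A_def by (intro Max_in) auto
  then obtain b where nz: "u (A, b) \<noteq> 0" by auto
  have "u (A + 1, b - 1) = 0" using Max_ge[OF fin, of "A + 1"] by (force simp: A_def)
  moreover have "act \<alpha> \<beta> 1 u (A + 1, b) = 0" using assms(2) by simp
  ultimately have "\<alpha> = - of_int A" using nz by (auto simp: act_apply)
  then show ?thesis by simp
qed

lemma act_one_injective:
  assumes "\<not> (\<alpha> \<in> \<int> \<and> \<beta> \<in> \<int>)" and "fin_supp u" and "act \<alpha> \<beta> 1 u = (\<lambda>_. 0)"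
  shows "u = (\<lambda>_. 0)"
proof (rule ccontr)
  assume "u \<noteq> (\<lambda>_. 0)"
  then obtain a b where nz: "u (a, b) \<noteq> 0" by fastforce
  have "\<alpha> \<in> \<int>" using act_one_kernel_Ints[OF assms(2,3) nz] .
  moreover have "\<beta> \<in> \<int>"
  proof (rule act_one_kernel_Ints)
    show "fin_supp (\<lambda>(a, b). u (b, a))"
      using fin_supp_reindex[OF assms(2), of prod.swap] by (simp add: case_prod_unfold prod.swap_def)
    show "act \<beta> \<alpha> 1 (\<lambda>(a, b). u (b, a)) = (\<lambda>_. 0)"
      using assms(3) by (auto simp: fun_eq_iff act_swap)
    show "(\<lambda>(a, b). u (b, a)) (b, a) \<noteq> 0" using nz by simp
  qed
  ultimately show False using assms(1) by blast
qed

lemma act_minus_one_injective: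
  assumes "\<not> (\<alpha> \<in> \<int> \<and> \<beta> \<in> \<int>)" and "fin_supp u" and "act \<alpha> \<beta> (- 1) u = (\<lambda>_. 0)"
  shows "u = (\<lambda>_. 0)"
proof -
  have "inj (\<lambda>(a, b). (- a :: int, - b :: int))" by (auto simp: inj_def)
  then have "fin_supp (\<lambda>(a, b). u (- a, - b))"
    using fin_supp_reindex[OF assms(2)] by (simp add: case_prod_unfold)
  moreover have "act \<alpha> \<beta> 1 (\<lambda>(a, b). u (- a, - b)) = (\<lambda>_. 0)"
    using assms(3) by (auto simp: fun_eq_iff act_flip)
  ultimately have "(\<lambda>(a, b). u (- a, - b)) = (\<lambda>_. 0)" using act_one_injective[OF assms(1)] by blast
  then show ?thesis by (metis (mono_tags) case_prod_conv minus_minus surj_pair)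
qed

lemma cocycle_eq_zero:
  assumes "\<not> (\<alpha> \<in> \<int> \<and> \<beta> \<in> \<int>)" and "cocycle \<alpha> \<beta> E" and "\<forall>n. fin_supp (E n)"
    and "E 0 = (\<lambda>_. 0)" and "E 1 = (\<lambda>_. 0)"
  shows "E n = (\<lambda>_. 0)"
proof -
  have down: "E (k - 1) = (\<lambda>_. 0)" if "E k = (\<lambda>_. 0)" for k
  proof (rule act_one_injective[OF assms(1) assms(3)[rule_format]], rule ext)
    fix p
    show "act \<alpha> \<beta> 1 (E (k - 1)) p = 0"
      using cocycleD[OF assms(2), of 1 "k - 1" p] that assms(5) by (simp add: act_zero)
  qed
  have minus_one: "E (- 1) = (\<lambda>_. 0)" using down[of 0] assms(4) by simp
  have up: "E (k + 1) = (\<lambda>_. 0)" if "E k = (\<lambda>_. 0)" for k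
  proof (rule act_minus_one_injective[OF assms(1) assms(3)[rule_format]], rule ext)
    fix p
    show "act \<alpha> \<beta> (- 1) (E (k + 1)) p = 0"
      using cocycleD[OF assms(2), of "- 1" "k + 1" p] that minus_one by (simp add: act_zero)
  qed
  show ?thesis
    by (induction n rule: int_induct[where k = 0]) (use assms(4) up down in auto)
qed

section \<open>Homogeneous cocycles\<close>

definition homogeneous :: "(int \<Rightarrow> int \<times> int \<Rightarrow> complex) \<Rightarrow> bool" where
  "homogeneous D \<longleftrightarrow> (\<forall>n a b. a + b \<noteq> n \<longrightarrow> D n (a, b) = 0)"

lemma cocycle_homogeneous:
  assumes "cocycle \<alpha> \<beta> D" and "\<forall>a b. a + b \<noteq> 0 \<longrightarrow> D 0 (a, b) = 0"
  shows "homogeneous D"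
  unfolding homogeneous_def
proof (intro allI impI)
  fix n a b :: int
  assume ne: "a + b \<noteq> n"
  have "of_int (0 - n) * D (0 + n) (a, b) = act \<alpha> \<beta> 0 (D n) (a, b) - act \<alpha> \<beta> n (D 0) (a, b)"
    by (rule cocycleD[OF assms(1)])
  moreover have "D 0 (a - n, b) = 0" "D 0 (a, b - n) = 0" using assms(2) ne by auto
  ultimately have "of_int (a + b - n) * D n (a, b) = 0" by (simp add: act_apply algebra_simps)
  with ne show "D n (a, b) = 0" by (simp only: mult_eq_0_iff of_int_eq_0_iff) simp
qed

lemma homogeneous_cocycle_vanishes_at_0:
  assumes "\<not> (\<alpha> \<in> \<int> \<and> \<beta> \<in> \<int>)" and "fin_supp (D 0)"
    and "cocycle \<alpha> \<beta> D" and "homogeneous D"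
  shows "D 0 = (\<lambda>_. 0)"
proof (rule act_one_injective[OF assms(1,2)], rule ext)
  fix p :: "int \<times> int"
  obtain a b where p: "p = (a, b)" by fastforce
  show "act \<alpha> \<beta> 1 (D 0) p = 0"
  proof (cases "a + b = 1")
    case True
    have "of_int (0 - 1) * D (0 + 1) (a, b) = act \<alpha> \<beta> 0 (D 1) (a, b) - act \<alpha> \<beta> 1 (D 0) (a, b)"
      by (rule cocycleD[OF assms(3)])
    with True show ?thesis unfolding p by (simp add: act_0_apply)
  next
    case False
    then have "D 0 (a - 1, b) = 0" "D 0 (a, b - 1) = 0" using assms(4) by (auto simp: homogeneous_def)
    then show ?thesis unfolding p by (simp add: act_apply)
  qed
qed

lemma is_der_homogeneous_representative:
  assumes "\<not> (\<alpha> \<in> \<int> \<and> \<beta> \<in> \<int>)" and "is_der \<alpha> \<beta> D"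
  obtains v where "fin_supp v" and "homogeneous (\<lambda>n p. D n p - act \<alpha> \<beta> n v p)"
    and "D 0 = act \<alpha> \<beta> 0 v"
proof -
  have fin: "\<forall>n. fin_supp (D n)" and coc: "cocycle \<alpha> \<beta> D"
    using assms(2) by (auto simp: is_der_iff_cocycle)
  define v where "v = (\<lambda>(a, b). if a + b = 0 then 0 else - D 0 (a, b) / of_int (a + b))"
  have fin_v: "fin_supp v"
    using fin unfolding fin_supp_def v_def by (force elim: finite_subset[rotated] split: if_splits)
  define E where "E = (\<lambda>n p. D n p - act \<alpha> \<beta> n v p)"
  have coc_E: "cocycle \<alpha> \<beta> E" unfolding E_def using coc cocycle_act by (rule cocycle_diff)
  have "E 0 (a, b) = 0" if "a + b \<noteq> 0" for a b
  proof -
    have "(of_int (a + b) :: complex) \<noteq> 0" using that by (metis of_int_eq_0_iff)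
    with that show ?thesis by (simp add: E_def v_def act_0_apply del: of_int_add)
  qed
  then have hom_E: "homogeneous E" using coc_E by (blast intro: cocycle_homogeneous)
  have "fin_supp (E 0)" unfolding E_def using fin fin_supp_act[OF fin_v] by (blast intro: fin_supp_diff)
  then have "E 0 = (\<lambda>_. 0)" using homogeneous_cocycle_vanishes_at_0[OF assms(1) _ coc_E hom_E] by blast
  then have "D 0 = act \<alpha> \<beta> 0 v" by (simp add: E_def fun_eq_iff)
  with fin_v hom_E show thesis unfolding E_def by (rule that)
qed

section \<open>Weight spaces and the cokernel of \<open>L\<^sub>1\<close>\<close>

lemma of_int_add_neq_0:
  assumes "\<alpha> \<notin> \<int>"
  shows "of_int j + \<alpha> \<noteq> 0"
proof
  assume "of_int j + \<alpha> = 0"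
  then have "\<alpha> = of_int (- j)" by (simp add: eq_neg_iff_add_eq_0 add.commute)
  with assms show False by simp
qed

lemma of_int_diff_neq_0:
  assumes "\<beta> \<notin> \<int>"
  shows "of_int j - \<beta> \<noteq> 0"
  using assms by auto

definition fin_supp1 :: "(int \<Rightarrow> complex) \<Rightarrow> bool" where
  "fin_supp1 x \<longleftrightarrow> finite {a. x a \<noteq> 0}"

text \<open>A vector of weight \<open>n\<close> is a combination of the \<open>v\<^sub>a \<otimes> v\<^sub>n\<^sub>-\<^sub>a\<close>; we record it by its coordinates
  \<open>x a\<close>, the coefficient of \<open>v\<^sub>a \<otimes> v\<^sub>n\<^sub>-\<^sub>a\<close>. In these coordinates \<open>act_weight \<alpha> \<beta> m n\<close> is the
  action of \<open>L\<^sub>m\<close> from weight \<open>n\<close> to weight \<open>m + n\<close>.\<close>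

definition weight_vec :: "int \<Rightarrow> (int \<Rightarrow> complex) \<Rightarrow> int \<times> int \<Rightarrow> complex" where
  "weight_vec n x = (\<lambda>(a, b). if a + b = n then x a else 0)"

definition act_weight :: "complex \<Rightarrow> complex \<Rightarrow> int \<Rightarrow> int \<Rightarrow> (int \<Rightarrow> complex) \<Rightarrow> int \<Rightarrow> complex" where
  "act_weight \<alpha> \<beta> m n x a =
     - (of_int (a - m) + \<alpha> * of_int m) * x (a - m) + (of_int (a - n) - \<beta> * of_int m) * x a"

definition delta :: "int \<Rightarrow> complex \<Rightarrow> int \<Rightarrow> complex" where
  "delta K c = (\<lambda>a. if a = K then c else 0)"

lemma act_diag: "act \<alpha> \<beta> m u (a, m + n - a) = act_weight \<alpha> \<beta> m n (\<lambda>a. u (a, n - a)) a"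
proof -
  have e: "m + n - a - m = n - a" "m + n - a = n - (a - m)" by auto
  show ?thesis unfolding act_apply act_weight_def e by (simp add: algebra_simps)
qed

lemma cocycle_diag:
  assumes "cocycle \<alpha> \<beta> E"
  shows "of_int (m - n) * E (m + n) (a, m + n - a) =
    act_weight \<alpha> \<beta> m n (\<lambda>a. E n (a, n - a)) a - act_weight \<alpha> \<beta> n m (\<lambda>a. E m (a, m - a)) a"
  using cocycleD[OF assms, of m n "(a, m + n - a)"] act_diag[of \<alpha> \<beta> n "E m" a m] by (simp add: act_diag add.commute)

lemma act_weight_vec: "act \<alpha> \<beta> m (weight_vec n x) = weight_vec (m + n) (act_weight \<alpha> \<beta> m n x)"
proof (rule ext, clarify)
  fix a b :: int
  show "act \<alpha> \<beta> m (weight_vec n x) (a, b) = weight_vec (m + n) (act_weight \<alpha> \<beta> m n x) (a, b)"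
  proof (cases "a + b = m + n")
    case True
    then have "b = m + n - a" by simp
    then show ?thesis by (simp add: act_diag weight_vec_def)
  qed (simp add: act_apply weight_vec_def algebra_simps)
qed

lemma fin_supp_weight_vec: "fin_supp1 x \<Longrightarrow> fin_supp (weight_vec n x)"
  unfolding fin_supp_def fin_supp1_def weight_vec_def
  by (rule finite_subset[of _ "(\<lambda>a. (a, n - a)) ` {a. x a \<noteq> 0}"]) (auto split: if_splits)

lemma fin_supp1_diag: "fin_supp u \<Longrightarrow> fin_supp1 (\<lambda>a. u (a, n - a))"
  unfolding fin_supp_def fin_supp1_def
  by (rule finite_subset[of _ "fst ` {p. u p \<noteq> 0}"]) (auto intro: image_eqI[of _ _ "(_, n - _)"])

lemma fin_supp1_add: "fin_supp1 u \<Longrightarrow> fin_supp1 v \<Longrightarrow> fin_supp1 (\<lambda>a. u a + v a)"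
  unfolding fin_supp1_def by (rule finite_subset[of _ "{a. u a \<noteq> 0} \<union> {a. v a \<noteq> 0}"]) auto

lemma fin_supp1_delta: "fin_supp1 (delta K c)"
  unfolding fin_supp1_def delta_def by (rule finite_subset[of _ "{K}"]) auto

lemma fin_supp1_bounded:
  assumes "fin_supp1 x"
  obtains R where "\<And>a. x a \<noteq> 0 \<Longrightarrow> - R \<le> a \<and> a \<le> R"
proof -
  have "bdd_above (abs ` {a. x a \<noteq> 0})"
    using assms unfolding fin_supp1_def by (intro bdd_above_finite finite_imageI)
  then obtain R where "\<And>a. x a \<noteq> 0 \<Longrightarrow> \<bar>a\<bar> \<le> R" by (auto simp: bdd_above_def)
  then show thesis by (intro that[of R]) (fastforce simp: abs_le_iff)
qed

lemma fin_supp1_last: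
  assumes "fin_supp1 x" and "x j \<noteq> 0"
  obtains q where "j \<le> q" and "x q \<noteq> 0" and "\<And>a. q < a \<Longrightarrow> x a = 0"
proof
  define S where "S = {a. x a \<noteq> 0}"
  have fin: "finite S" and j: "j \<in> S" using assms by (auto simp: fin_supp1_def S_def)
  show "j \<le> Max S" using Max_ge[OF fin j] .
  show "x (Max S) \<noteq> 0" using Max_in[OF fin] j by (auto simp: S_def)
  show "x a = 0" if "Max S < a" for a using Max_ge[OF fin, of a] that by (force simp: S_def)
qed

lemma fin_supp1_first:
  assumes "fin_supp1 x" and "x j \<noteq> 0"
  obtains p where "p \<le> j" and "x p \<noteq> 0" and "\<And>a. a < p \<Longrightarrow> x a = 0"
proof
  define S where "S = {a. x a \<noteq> 0}"
  have fin: "finite S" and j: "j \<in> S" using assms by (auto simp: fin_supp1_def S_def)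
  show "Min S \<le> j" using Min_le[OF fin j] .
  show "x (Min S) \<noteq> 0" using Min_in[OF fin] j by (auto simp: S_def)
  show "x a = 0" if "a < Min S" for a using Min_le[OF fin, of a] that by (force simp: S_def)
qed

lemma act_weight_0_0: "act_weight \<alpha> \<beta> 0 0 w = (\<lambda>_. 0)"
  by (simp add: act_weight_def fun_eq_iff)

lemma act_weight_add: "act_weight \<alpha> \<beta> m n (\<lambda>a. u a + v a) a = act_weight \<alpha> \<beta> m n u a + act_weight \<alpha> \<beta> m n v a"
  by (simp add: act_weight_def algebra_simps)

lemma act_weight_delta:
  "act_weight \<alpha> \<beta> 1 0 (delta j s) a = delta (j + 1) (- (of_int j + \<alpha>) * s) a + delta j ((of_int j - \<beta>) * s) a"
  by (auto simp: act_weight_def delta_def)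

lemma act_weight_swap: "act_weight \<beta> \<alpha> 1 0 w (1 - a) = act_weight \<alpha> \<beta> 1 0 (\<lambda>a. w (- a)) a"
  by (simp add: act_weight_def algebra_simps)

text \<open>\<open>cong_delta \<alpha> \<beta> r K c\<close>: the weight-one vector \<open>r\<close> is congruent to \<open>c v\<^sub>K \<otimes> v\<^sub>1\<^sub>-\<^sub>K\<close> modulo
  \<open>L\<^sub>1\<close> applied to weight-zero vectors.\<close>

definition cong_delta :: "complex \<Rightarrow> complex \<Rightarrow> (int \<Rightarrow> complex) \<Rightarrow> int \<Rightarrow> complex \<Rightarrow> bool" where
  "cong_delta \<alpha> \<beta> r K c \<longleftrightarrow> (\<exists>w. fin_supp1 w \<and> (\<forall>a. r a = act_weight \<alpha> \<beta> 1 0 w a + delta K c a))"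

lemma cong_delta_trans:
  assumes "cong_delta \<alpha> \<beta> r K c" and "cong_delta \<alpha> \<beta> (delta K c) K' c'"
  shows "cong_delta \<alpha> \<beta> r K' c'"
proof -
  obtain w w' where "fin_supp1 w" "fin_supp1 w'" 
    and "\<forall>a. r a = act_weight \<alpha> \<beta> 1 0 w a + delta K c a"
    and "\<forall>a. delta K c a = act_weight \<alpha> \<beta> 1 0 w' a + delta K' c' a"
    using assms unfolding cong_delta_def by blast
  then show ?thesis unfolding cong_delta_def
    by (intro exI[of _ "\<lambda>a. w a + w' a"]) (simp add: fin_supp1_add act_weight_add)
qed

lemma cong_delta_down:
  assumes "\<alpha> \<notin> \<int>" and "\<forall>a. r a \<noteq> 0 \<longrightarrow> K \<le> a \<and> a \<le> K + int N"
  shows "\<exists>c. cong_delta \<alpha> \<beta> r K c"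
  using assms(2)
proof (induction N arbitrary: r)
  case 0
  then have "\<forall>a. r a = act_weight \<alpha> \<beta> 1 0 (\<lambda>_. 0) a + delta K (r K) a"
    by (auto simp: act_weight_def delta_def)
  moreover have "fin_supp1 (\<lambda>_. 0)" by (simp add: fin_supp1_def)
  ultimately show ?case unfolding cong_delta_def by blast
next
  case (Suc N)
  define j where "j = K + int N"
  have j_\<alpha>: "of_int j + \<alpha> \<noteq> 0" using assms(1) by (rule of_int_add_neq_0)
  define w where "w = delta j (- r (j + 1) / (of_int j + \<alpha>))"
  define r' where "r' = (\<lambda>a. r a - act_weight \<alpha> \<beta> 1 0 w a)"
  have "r' a = 0" if "\<not> (K \<le> a \<and> a \<le> K + int N)" for a
  proof (cases "a = j + 1")
    case True
    with j_\<alpha> show ?thesis unfolding r'_def w_def act_weight_delta by (simp add: delta_def field_simps)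
  next
    case False
    with that Suc.prems have "r a = 0" and "a \<noteq> j" by (auto simp: j_def)
    with False show ?thesis unfolding r'_def w_def act_weight_delta by (simp add: delta_def)
  qed
  then obtain c w' where w': "fin_supp1 w'" and r': "\<forall>a. r' a = act_weight \<alpha> \<beta> 1 0 w' a + delta K c a"
    using Suc.IH[of r'] unfolding cong_delta_def by blast
  have "r a = act_weight \<alpha> \<beta> 1 0 (\<lambda>a. w' a + w a) a + delta K c a" for a
    using r'[rule_format, of a] unfolding r'_def act_weight_add by (simp add: diff_eq_eq algebra_simps)
  moreover have "fin_supp1 (\<lambda>a. w' a + w a)" using w' by (simp add: w_def fin_supp1_add fin_supp1_delta)
  ultimately show ?case unfolding cong_delta_def by blast
qed

lemma cong_delta_up:
  assumes "\<beta> \<notin> \<int>" and "\<forall>a. r a \<noteq> 0 \<longrightarrow> K - int N \<le> a \<and> a \<le> K"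
  shows "\<exists>c. cong_delta \<alpha> \<beta> r K c"
proof -
  have "\<forall>a. r (1 - a) \<noteq> 0 \<longrightarrow> 1 - K \<le> a \<and> a \<le> 1 - K + int N" using assms(2) by force
  then obtain c w where w: "fin_supp1 w"
    and r: "\<forall>a. r (1 - a) = act_weight \<beta> \<alpha> 1 0 w a + delta (1 - K) c a"
    using cong_delta_down[OF assms(1), where r = "\<lambda>a. r (1 - a)" and K = "1 - K" and \<beta> = \<alpha>]
    unfolding cong_delta_def by blast
  have "r a = act_weight \<alpha> \<beta> 1 0 (\<lambda>a. w (- a)) a + delta K c a" for a
    using r[rule_format, of "1 - a"] by (simp add: act_weight_swap delta_def)
  moreover have "fin_supp1 (\<lambda>a. w (- a))"
    using w finite_vimageI[of "{a. w a \<noteq> 0}" uminus] by (simp add: fin_supp1_def vimage_def inj_def)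
  ultimately show ?thesis unfolding cong_delta_def by blast
qed

lemma cong_delta_0:
  assumes "\<alpha> \<notin> \<int>" and "\<beta> \<notin> \<int>" and "fin_supp1 r"
  shows "\<exists>c. cong_delta \<alpha> \<beta> r 0 c"
proof -
  obtain R where R: "\<And>a. r a \<noteq> 0 \<Longrightarrow> - R \<le> a \<and> a \<le> R" using fin_supp1_bounded[OF assms(3)] by blast
  then have "\<forall>a. r a \<noteq> 0 \<longrightarrow> - \<bar>R\<bar> \<le> a \<and> a \<le> - \<bar>R\<bar> + int (nat (2 * \<bar>R\<bar>))" by fastforce
  then obtain c where c: "cong_delta \<alpha> \<beta> r (- \<bar>R\<bar>) c" using cong_delta_down[OF assms(1)] by blast
  have "\<forall>a. delta (- \<bar>R\<bar>) c a \<noteq> 0 \<longrightarrow> 0 - int (nat \<bar>R\<bar>) \<le> a \<and> a \<le> 0"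
    by (simp add: delta_def)
  then obtain c' where "cong_delta \<alpha> \<beta> (delta (- \<bar>R\<bar>) c) 0 c'" using cong_delta_up[OF assms(2)] by blast
  with c show ?thesis by (blast intro: cong_delta_trans)
qed

text \<open>The bounds on \<open>K\<close> keep the integers \<open>-\<alpha>\<close> and \<open>\<beta>\<close> out of the range where the
  recurrences in \<open>act_weight_1_m1_solution\<close> degenerate.\<close>

lemma cong_delta_exists:
  assumes "\<not> (\<alpha> \<in> \<int> \<and> \<beta> \<in> \<int>)" and "fin_supp1 r"
  obtains K c where "cong_delta \<alpha> \<beta> r K c"
    and "\<And>i. \<alpha> + of_int i = 0 \<Longrightarrow> i < K" and "\<And>i. \<beta> = of_int i \<Longrightarrow> K \<le> i"
    and "\<alpha> \<notin> \<int> \<Longrightarrow> \<beta> \<notin> \<int> \<Longrightarrow> K = 0"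
proof -
  obtain R where R: "\<And>a. r a \<noteq> 0 \<Longrightarrow> - R \<le> a \<and> a \<le> R" using fin_supp1_bounded[OF assms(2)] by blast
  consider "\<alpha> \<notin> \<int>" "\<beta> \<notin> \<int>" | "\<alpha> \<in> \<int>" "\<beta> \<notin> \<int>" | "\<alpha> \<notin> \<int>" "\<beta> \<in> \<int>"
    using assms(1) by blast
  then show thesis
  proof cases
    case 1
    then obtain c where "cong_delta \<alpha> \<beta> r 0 c" using cong_delta_0 assms(2) by blast
    with 1 show thesis by (intro that[of 0 c]) (auto simp: add_eq_0_iff2)
  next
    case 2
    then obtain a where a: "\<alpha> = of_int a" by (auto elim: Ints_cases)
    define K where "K = max R (1 - a)"
    have "\<forall>x. r x \<noteq> 0 \<longrightarrow> K - int (nat (K + R)) \<le> x \<and> x \<le> K" using R by (fastforce simp: K_def)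
    then obtain c where "cong_delta \<alpha> \<beta> r K c" using cong_delta_up[OF 2(2)] by blast
    moreover have "i < K" if "\<alpha> + of_int i = 0" for i
    proof -
      from that a have "of_int (a + i) = (0 :: complex)" by simp
      then have "a + i = 0" by (simp only: of_int_eq_0_iff)
      then show ?thesis by (simp add: K_def)
    qed
    ultimately show thesis using 2 by (intro that[of K c]) auto
  next
    case 3
    then obtain b where b: "\<beta> = of_int b" by (auto elim: Ints_cases)
    define K where "K = min (- R) b"
    have "\<forall>a. r a \<noteq> 0 \<longrightarrow> K \<le> a \<and> a \<le> K + int (nat (R - K))" using R by (fastforce simp: K_def)
    then obtain c where "cong_delta \<alpha> \<beta> r K c" using cong_delta_down[OF 3(1)] by blast
    moreover have "\<alpha> + of_int i \<noteq> 0" for i using of_int_add_neq_0[OF 3(1)] by (simp add: add.commute)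
    ultimately show thesis using 3 b by (intro that[of K c]) (auto simp: K_def)
  qed
qed

section \<open>The weight-one coefficient\<close>

lemma act_weight_1_m1: "act_weight \<alpha> \<beta> 1 (- 1) z a = - (of_int a - 1 + \<alpha>) * z (a - 1) + (of_int a + 1 - \<beta>) * z a"
  by (simp add: act_weight_def)

lemma act_weight_m1_1: "act_weight \<alpha> \<beta> (- 1) 1 x a = - (of_int a + 1 - \<alpha>) * x (a + 1) + (of_int a - 1 + \<beta>) * x a"
  by (simp add: act_weight_def)

lemma act_weight_m1_2: "act_weight \<alpha> \<beta> (- 1) 2 x a = - (of_int a + 1 - \<alpha>) * x (a + 1) + (of_int a - 2 + \<beta>) * x a"
  by (simp add: act_weight_def)

lemma act_weight_2_m1: "act_weight \<alpha> \<beta> 2 (- 1) x a = - (of_int a - 2 + 2 * \<alpha>) * x (a - 2) + (of_int a + 1 - 2 * \<beta>) * x a"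
  by (simp add: act_weight_def algebra_simps)

lemma act_weight_1_m1_solution:
  assumes fin: "fin_supp1 z"
    and eq: "\<forall>a. act_weight \<alpha> \<beta> 1 (- 1) z a = act_weight \<alpha> \<beta> (- 1) 1 (delta K c) a"
    and \<alpha>_K: "\<And>i. \<alpha> + of_int i = 0 \<Longrightarrow> i < K" and \<beta>_K: "\<And>i. \<beta> = of_int i \<Longrightarrow> K \<le> i"
  shows "\<forall>a. a \<noteq> K - 1 \<longrightarrow> z a = 0"
    and "(of_int K - \<beta>) * z (K - 1) = c * (\<alpha> - of_int K)"
    and "- (of_int K - 1 + \<alpha>) * z (K - 1) = c * (of_int K - 1 + \<beta>)"
proof -
  have above: "z j = 0" if "K \<le> j" for j
  proof (rule ccontr)
    assume "z j \<noteq> 0"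
    then obtain q where q: "j \<le> q" "z q \<noteq> 0" "\<And>a. q < a \<Longrightarrow> z a = 0"
      using fin_supp1_last[OF fin] by blast
    have "(of_int q + \<alpha>) * z q = 0"
      using eq[rule_format, of "q + 1"] q(3)[of "q + 1"] q(1) that
      by (simp add: act_weight_1_m1 act_weight_m1_1 delta_def algebra_simps)
    moreover have "\<alpha> + of_int q \<noteq> 0" using \<alpha>_K[of q] q(1) that by (meson not_le order_trans)
    ultimately show False using q(2) by (simp add: add.commute)
  qed
  have below: "z j = 0" if "j \<le> K - 2" for j
  proof (rule ccontr)
    assume "z j \<noteq> 0"
    then obtain p where p: "p \<le> j" "z p \<noteq> 0" "\<And>a. a < p \<Longrightarrow> z a = 0"
      using fin_supp1_first[OF fin] by blast
    have "(of_int p + 1 - \<beta>) * z p = 0"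
      using eq[rule_format, of p] p(3)[of "p - 1"] p(1) that
      by (simp add: act_weight_1_m1 act_weight_m1_1 delta_def)
    moreover have "of_int p + 1 - \<beta> \<noteq> 0"
    proof
      assume "of_int p + 1 - \<beta> = 0"
      then have "\<beta> = of_int (p + 1)" by simp
      from \<beta>_K[OF this] p(1) that show False by linarith
    qed
    ultimately show False using p(2) by simp
  qed
  show "\<forall>a. a \<noteq> K - 1 \<longrightarrow> z a = 0"
  proof (intro allI impI)
    fix a assume "a \<noteq> K - 1"
    then have "K \<le> a \<or> a \<le> K - 2" by linarith
    then show "z a = 0" using above below by blast
  qed
  show "(of_int K - \<beta>) * z (K - 1) = c * (\<alpha> - of_int K)"
    using eq[rule_format, of "K - 1"] below[of "K - 2"]
    by (simp add: act_weight_1_m1 act_weight_m1_1 delta_def algebra_simps)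
  show "- (of_int K - 1 + \<alpha>) * z (K - 1) = c * (of_int K - 1 + \<beta>)"
    using eq[rule_format, of K] above[of K]
    by (simp add: act_weight_1_m1 act_weight_m1_1 delta_def algebra_simps)
qed

lemma act_weight_m1_2_constraint:
  assumes fin: "fin_supp1 x" and \<beta>: "\<beta> \<notin> \<int>"
    and eq: "\<forall>a. - 3 * delta K c a = act_weight \<beta> \<beta> (- 1) 2 x a - act_weight \<beta> \<beta> 2 (- 1) (delta (K - 1) (- c)) a"
  shows "c * (\<beta> * (\<beta> - 1) * (2 * \<beta> - 1)) = 0"
proof -
  have above: "x j = 0" if "K + 1 < j" for j
  proof (rule ccontr)
    assume "x j \<noteq> 0"
    then obtain q where q: "j \<le> q" "x q \<noteq> 0" "\<And>a. q < a \<Longrightarrow> x a = 0"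
      using fin_supp1_last[OF fin] by blast
    have "(of_int (q - 2) + \<beta>) * x q = 0"
      using eq[rule_format, of q] q(3)[of "q + 1"] q(1) that
      by (simp add: act_weight_m1_2 act_weight_2_m1 delta_def algebra_simps)
    then show False using q(2) of_int_add_neq_0[OF \<beta>, of "q - 2"] by simp
  qed
  have below: "x j = 0" if "j < K" for j
  proof (rule ccontr)
    assume "x j \<noteq> 0"
    then obtain p where p: "p \<le> j" "x p \<noteq> 0" "\<And>a. a < p \<Longrightarrow> x a = 0"
      using fin_supp1_first[OF fin] by blast
    have "(of_int p - \<beta>) * x p = 0"
      using eq[rule_format, of "p - 1"] p(3)[of "p - 1"] p(1) that
      by (simp add: act_weight_m1_2 act_weight_2_m1 delta_def algebra_simps)
    then show False using p(2) of_int_diff_neq_0[OF \<beta>] by simp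
  qed
  define k where "k = (of_int K :: complex)"
  have "(k - \<beta>) * x K = (k - 2 * \<beta>) * c"
    using eq[rule_format, of "K - 1"] below[of "K - 1"]
    by (simp add: k_def act_weight_m1_2 act_weight_2_m1 delta_def algebra_simps)
  moreover have "(k - 2 + \<beta>) * x K - (k + 1 - \<beta>) * x (K + 1) = - 3 * c"
    using eq[rule_format, of K]
    by (simp add: k_def act_weight_m1_2 act_weight_2_m1 delta_def algebra_simps)
  moreover have "(k - 1 + \<beta>) * x (K + 1) = (k - 1 + 2 * \<beta>) * c"
    using eq[rule_format, of "K + 1"] above[of "K + 2"]
    by (simp add: k_def act_weight_m1_2 act_weight_2_m1 delta_def algebra_simps)
  ultimately show ?thesis by algebra
qed

lemma cocycle_delta_coefficient_eq_0:
  assumes "\<not> (\<alpha> \<in> \<int> \<and> \<beta> \<in> \<int>)" and "\<alpha> + \<beta> \<noteq> 1"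
    and coc: "cocycle \<alpha> \<beta> E" and fin: "\<forall>n. fin_supp (E n)" and E0: "E 0 = (\<lambda>_. 0)"
    and E1: "\<forall>a. E 1 (a, 1 - a) = delta K c a"
    and \<alpha>_K: "\<And>i. \<alpha> + of_int i = 0 \<Longrightarrow> i < K" and \<beta>_K: "\<And>i. \<beta> = of_int i \<Longrightarrow> K \<le> i"
  shows "c = 0"
proof -
  define z where "z = (\<lambda>a. E (- 1) (a, - 1 - a))"
  have fin_z: "fin_supp1 z" unfolding z_def using fin by (simp add: fin_supp1_diag)
  have E1': "(\<lambda>a. E 1 (a, 1 - a)) = delta K c" using E1 by auto
  have "\<forall>a. act_weight \<alpha> \<beta> 1 (- 1) z a = act_weight \<alpha> \<beta> (- 1) 1 (delta K c) a"
    using cocycle_diag[OF coc, of 1 "- 1"] E0 by (simp add: z_def E1')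
  note z = act_weight_1_m1_solution[OF fin_z this \<alpha>_K \<beta>_K]
  show "c = 0"
  proof (cases "\<alpha> = \<beta>")
    case False
    from z(2,3) have "c * ((\<alpha> - \<beta>) * (\<alpha> + \<beta> - 1)) = 0" by algebra
    with False assms(2) show ?thesis by simp
  next
    case True
    then have \<beta>: "\<beta> \<notin> \<int>" using assms(1) by blast
    from z(2) True have "(of_int K - \<beta>) * (z (K - 1) + c) = 0" by (simp add: algebra_simps)
    with of_int_diff_neq_0[OF \<beta>, of K] have "z (K - 1) = - c" by (simp add: add_eq_0_iff2)
    with z(1) have z_delta: "z = delta (K - 1) (- c)" by (auto simp: delta_def)
    have "\<forall>a. - 3 * delta K c a = act_weight \<beta> \<beta> (- 1) 2 (\<lambda>a. E 2 (a, 2 - a)) a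
        - act_weight \<beta> \<beta> 2 (- 1) (delta (K - 1) (- c)) a"
      using cocycle_diag[OF coc, of "- 1" 2] by (simp add: E1 z_def[symmetric] z_delta True)
    then have "c * (\<beta> * (\<beta> - 1) * (2 * \<beta> - 1)) = 0"
      using act_weight_m1_2_constraint[OF fin_supp1_diag \<beta>] fin by blast
    moreover have "\<beta> \<noteq> 0" "\<beta> - 1 \<noteq> 0" using \<beta> by auto
    moreover have "2 * \<beta> - 1 \<noteq> 0" using assms(2) True by (auto simp: algebra_simps)
    ultimately show ?thesis by simp
  qed
qed

lemma is_der_weight_one_form:
  assumes ni: "\<not> (\<alpha> \<in> \<int> \<and> \<beta> \<in> \<int>)" and D: "is_der \<alpha> \<beta> D"
  obtains v K c where "fin_supp v" and "D 0 = act \<alpha> \<beta> 0 v"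
    and "D 1 = (\<lambda>p. act \<alpha> \<beta> 1 v p + weight_vec 1 (delta K c) p)"
    and "\<And>i. \<alpha> + of_int i = 0 \<Longrightarrow> i < K" and "\<And>i. \<beta> = of_int i \<Longrightarrow> K \<le> i"
    and "\<alpha> \<notin> \<int> \<Longrightarrow> \<beta> \<notin> \<int> \<Longrightarrow> K = 0"
proof -
  obtain v0 where v0: "fin_supp v0" and hom: "homogeneous (\<lambda>n p. D n p - act \<alpha> \<beta> n v0 p)"
    and D0: "D 0 = act \<alpha> \<beta> 0 v0"
    using is_der_homogeneous_representative[OF assms] by blast
  have finD: "\<forall>n. fin_supp (D n)" using D by (simp add: is_der_iff_cocycle)
  define r where "r = (\<lambda>a. D 1 (a, 1 - a) - act \<alpha> \<beta> 1 v0 (a, 1 - a))"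
  have "fin_supp1 r"
    unfolding r_def by (rule fin_supp1_diag[OF fin_supp_diff[OF finD[rule_format] fin_supp_act[OF v0]]])
  then obtain K c where "cong_delta \<alpha> \<beta> r K c"
    and K: "\<And>i. \<alpha> + of_int i = 0 \<Longrightarrow> i < K" "\<And>i. \<beta> = of_int i \<Longrightarrow> K \<le> i"
      "\<alpha> \<notin> \<int> \<Longrightarrow> \<beta> \<notin> \<int> \<Longrightarrow> K = 0"
    using cong_delta_exists[OF ni] by blast
  then obtain w where w: "fin_supp1 w" and r: "\<forall>a. r a = act_weight \<alpha> \<beta> 1 0 w a + delta K c a"
    unfolding cong_delta_def by blast
  define v where "v = (\<lambda>p. v0 p + weight_vec 0 w p)"
  have act_v: "act \<alpha> \<beta> n v p = act \<alpha> \<beta> n v0 p + weight_vec n (act_weight \<alpha> \<beta> n 0 w) p" for n p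
    by (simp add: v_def act_add act_weight_vec)
  have "fin_supp v" unfolding v_def using v0 w by (simp add: fin_supp_add fin_supp_weight_vec)
  moreover have "D 0 = act \<alpha> \<beta> 0 v"
    unfolding fun_eq_iff act_v act_weight_0_0 using D0 by (simp add: weight_vec_def)
  moreover have "D 1 = (\<lambda>p. act \<alpha> \<beta> 1 v p + weight_vec 1 (delta K c) p)"
  proof (rule ext, clarify)
    fix a b :: int
    show "D 1 (a, b) = act \<alpha> \<beta> 1 v (a, b) + weight_vec 1 (delta K c) (a, b)"
    proof (cases "a + b = 1")
      case True
      then have b: "b = 1 - a" by simp
      from r show ?thesis unfolding act_v b by (simp add: r_def weight_vec_def algebra_simps)
    next
      case False
      with hom show ?thesis unfolding act_v by (simp add: weight_vec_def homogeneous_def)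
    qed
  qed
  ultimately show thesis using K by (rule that)
qed

lemma cocycle_normal_form:
  assumes ni: "\<not> (\<alpha> \<in> \<int> \<and> \<beta> \<in> \<int>)" and D: "is_der \<alpha> \<beta> D"
  obtains v c where "fin_supp v" and "D 0 = act \<alpha> \<beta> 0 v"
    and "D 1 = (\<lambda>p. act \<alpha> \<beta> 1 v p + weight_vec 1 (delta 0 c) p)" and "\<alpha> + \<beta> \<noteq> 1 \<Longrightarrow> c = 0"
proof -
  obtain v K c where v: "fin_supp v" and D0: "D 0 = act \<alpha> \<beta> 0 v"
    and D1: "D 1 = (\<lambda>p. act \<alpha> \<beta> 1 v p + weight_vec 1 (delta K c) p)"
    and K: "\<And>i. \<alpha> + of_int i = 0 \<Longrightarrow> i < K" "\<And>i. \<beta> = of_int i \<Longrightarrow> K \<le> i"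
      "\<alpha> \<notin> \<int> \<Longrightarrow> \<beta> \<notin> \<int> \<Longrightarrow> K = 0"
    using is_der_weight_one_form[OF assms] by blast
  let ?E = "\<lambda>n p. D n p - act \<alpha> \<beta> n v p"
  have c: "c = 0" if "\<alpha> + \<beta> \<noteq> 1"
  proof (rule cocycle_delta_coefficient_eq_0[OF ni that _ _ _ _ K(1,2)])
    show "cocycle \<alpha> \<beta> ?E" using D cocycle_act by (auto simp: is_der_iff_cocycle intro: cocycle_diff)
    show "\<forall>n. fin_supp (?E n)" using D fin_supp_act[OF v] by (simp add: is_der_iff_cocycle fin_supp_diff)
    show "?E 0 = (\<lambda>_. 0)" "\<forall>a. ?E 1 (a, 1 - a) = delta K c a"
      using D0 D1 by (simp_all add: weight_vec_def)
  qed
  have "K = 0" if "\<alpha> + \<beta> = 1"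
  proof (rule K(3))
    from that have "\<alpha> = 1 - \<beta>" "\<beta> = 1 - \<alpha>" by (simp_all add: algebra_simps)
    then show "\<alpha> \<notin> \<int>" "\<beta> \<notin> \<int>" using ni by (auto intro: Ints_diff)
  qed
  then have "weight_vec 1 (delta K c) = weight_vec 1 (delta 0 c)"
    using c by (cases "\<alpha> + \<beta> = 1") (auto simp: delta_def)
  with v D0 D1 c show thesis by (intro that[of v c]) simp_all
qed

lemma dcoc_eq:
  "dcoc \<beta> n (a, b) =
     (if b = n - a then (of_int a - of_int n * \<beta>) * (of_bool (0 \<le> a) - of_bool (n \<le> a)) else 0)"
  unfolding dcoc_def by auto

lemma cocycle_dcoc: "cocycle (1 - \<beta>) \<beta> (dcoc \<beta>)"
  unfolding cocycle_def
proof (intro allI)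
  fix m n :: int and p :: "int \<times> int"
  obtain a b where p: "p = (a, b)" by fastforce
  show "of_int (m - n) * dcoc \<beta> (m + n) p = act (1 - \<beta>) \<beta> m (dcoc \<beta> n) p - act (1 - \<beta>) \<beta> n (dcoc \<beta> m) p"
  proof (cases "a + b = m + n")
    case False
    then show ?thesis unfolding p act_apply dcoc_eq by auto
  next
    case True
    then have b: "b = m + n - a" by simp
    have "of_bool (0 \<le> a - m) = of_bool (m \<le> a)" "of_bool (n \<le> a - m) = of_bool (m + n \<le> a)"
      "of_bool (0 \<le> a - n) = of_bool (n \<le> a)" "of_bool (m \<le> a - n) = of_bool (m + n \<le> a)"
      by auto
    then show ?thesis unfolding p b act_apply dcoc_eq by (simp add: algebra_simps)
  qed
qed

lemma fin_supp_dcoc: "fin_supp (dcoc \<beta> n)"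
  unfolding fin_supp_def
proof (rule finite_subset)
  show "{p. dcoc \<beta> n p \<noteq> 0} \<subseteq> (\<lambda>a. (a, n - a)) ` {min 0 n..max 0 n}"
    by (clarsimp simp: dcoc_eq split: if_splits) (auto simp: of_bool_def split: if_splits)
qed simp

lemma dcoc_not_inner: "\<not> is_inner \<alpha> \<beta> (dcoc \<beta>)"
proof
  assume "is_inner \<alpha> \<beta> (dcoc \<beta>)"
  then obtain v where fin: "fin_supp v" and dv: "\<forall>n. dcoc \<beta> n = act \<alpha> \<beta> n v"
    unfolding is_inner_def by blast
  have "bdd_above (abs ` fst ` {p. v p \<noteq> 0})"
    using fin unfolding fin_supp_def by (intro bdd_above_finite finite_imageI)
  then obtain R where "\<And>a b. v (a, b) \<noteq> 0 \<Longrightarrow> \<bar>a\<bar> \<le> R" by (force simp: bdd_above_def)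
  then have v0: "v (a, b) = 0" if "R < \<bar>a\<bar>" for a b using that by force
  define n where "n = 2 * \<bar>R\<bar> + 3"
  \<comment> \<open>far from the support of \<open>v\<close>, \<open>L\<^sub>n v\<close> vanishes while \<open>dcoc \<beta> n\<close> has the distinct entries \<open>a - n\<beta>\<close>\<close>
  have "of_int a - of_int n * \<beta> = 0" if "a = \<bar>R\<bar> + 1 \<or> a = \<bar>R\<bar> + 2" for a
  proof -
    have "dcoc \<beta> n (a, n - a) = act \<alpha> \<beta> n v (a, n - a)" using dv by simp
    moreover have "v (a - n, n - a) = 0" "v (a, n - a - n) = 0" using v0 that by (auto simp: n_def)
    ultimately show ?thesis using that by (auto simp: dcoc_eq act_apply n_def)
  qed
  from this[of "\<bar>R\<bar> + 1"] this[of "\<bar>R\<bar> + 2"]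
  have "(of_int (\<bar>R\<bar> + 2) :: complex) - of_int (\<bar>R\<bar> + 1) = 0" by simp
  then show False by simp
qed

lemma dcoc_0: "dcoc \<beta> 0 = (\<lambda>_. 0)"
  by (auto simp: dcoc_def)

lemma dcoc_1: "dcoc \<beta> 1 = weight_vec 1 (delta 0 (- \<beta>))"
  by (auto simp: dcoc_def weight_vec_def delta_def)

section \<open>The first cohomology\<close>

lemma is_inner_if_sum_neq_1:
  assumes "\<not> (\<alpha> \<in> \<int> \<and> \<beta> \<in> \<int>)" and "\<alpha> + \<beta> \<noteq> 1" and D: "is_der \<alpha> \<beta> D"
  shows "is_inner \<alpha> \<beta> D"
proof -
  obtain v c where v: "fin_supp v" and D0: "D 0 = act \<alpha> \<beta> 0 v"
    and D1: "D 1 = (\<lambda>p. act \<alpha> \<beta> 1 v p + weight_vec 1 (delta 0 c) p)" and "c = 0"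
    using cocycle_normal_form[OF assms(1) D] assms(2) by metis
  let ?E = "\<lambda>n p. D n p - act \<alpha> \<beta> n v p"
  have "?E n = (\<lambda>_. 0)" for n
  proof (rule cocycle_eq_zero[OF assms(1)])
    show "cocycle \<alpha> \<beta> ?E" using D cocycle_act by (auto simp: is_der_iff_cocycle intro: cocycle_diff)
    show "\<forall>n. fin_supp (?E n)" using D fin_supp_act[OF v] by (simp add: is_der_iff_cocycle fin_supp_diff)
    show "?E 0 = (\<lambda>_. 0)" "?E 1 = (\<lambda>_. 0)"
      using D0 D1 \<open>c = 0\<close> by (auto simp: weight_vec_def delta_def)
  qed
  then show ?thesis unfolding is_inner_def using v by (auto simp: fun_eq_iff)
qed

lemma is_der_eq_dcoc_plus_inner:
  assumes \<beta>: "\<beta> \<notin> \<int>" and D: "is_der (1 - \<beta>) \<beta> D"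
  shows "\<exists>c E. is_inner (1 - \<beta>) \<beta> E \<and> (\<forall>n p. D n p = c * dcoc \<beta> n p + E n p)"
proof -
  have ni: "\<not> (1 - \<beta> \<in> \<int> \<and> \<beta> \<in> \<int>)" using \<beta> by blast
  obtain v c where v: "fin_supp v" and D0: "D 0 = act (1 - \<beta>) \<beta> 0 v"
    and D1: "D 1 = (\<lambda>p. act (1 - \<beta>) \<beta> 1 v p + weight_vec 1 (delta 0 c) p)"
    using cocycle_normal_form[OF ni D] by metis
  define c' where "c' = - c / \<beta>"
  let ?H = "\<lambda>n p. D n p - act (1 - \<beta>) \<beta> n v p - c' * dcoc \<beta> n p"
  have "\<beta> \<noteq> 0" using \<beta> by auto
  have "?H n = (\<lambda>_. 0)" for n
  proof (rule cocycle_eq_zero[OF ni])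
    show "cocycle (1 - \<beta>) \<beta> ?H"
      using D by (auto simp: is_der_iff_cocycle intro!: cocycle_diff cocycle_act cocycle_smult cocycle_dcoc)
    show "\<forall>n. fin_supp (?H n)"
      using D fin_supp_act[OF v] fin_supp_dcoc
      by (simp add: is_der_iff_cocycle fin_supp_diff fin_supp_smult)
    show "?H 0 = (\<lambda>_. 0)" using D0 by (simp add: dcoc_0)
    show "?H 1 = (\<lambda>_. 0)"
      using D1 \<open>\<beta> \<noteq> 0\<close> by (auto simp: dcoc_1 weight_vec_def delta_def c'_def fun_eq_iff)
  qed
  then have "\<forall>n p. D n p = c' * dcoc \<beta> n p + act (1 - \<beta>) \<beta> n v p"
    by (auto simp: fun_eq_iff algebra_simps)
  moreover have "is_inner (1 - \<beta>) \<beta> (\<lambda>n. act (1 - \<beta>) \<beta> n v)" unfolding is_inner_def using v by blast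
  ultimately show ?thesis by blast
qed

theorem mainTheorem2:
  fixes \<alpha> \<beta> :: complex
  assumes "\<not> (\<alpha> \<in> \<int> \<and> \<beta> \<in> \<int>)"
  shows "(\<alpha> + \<beta> \<noteq> 1 \<longrightarrow> (\<forall>D. is_der \<alpha> \<beta> D \<longrightarrow> is_inner \<alpha> \<beta> D))
       \<and> (\<alpha> + \<beta> = 1 \<longrightarrow>
            is_der (1 - \<beta>) \<beta> (dcoc \<beta>)
          \<and> \<not> is_inner (1 - \<beta>) \<beta> (dcoc \<beta>)
          \<and> (\<forall>D. is_der (1 - \<beta>) \<beta> D \<longrightarrow>
               (\<exists>c E. is_inner (1 - \<beta>) \<beta> E \<and> (\<forall>n p. D n p = c * dcoc \<beta> n p + E n p))))"
proof (intro conjI impI allI)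
  show "is_inner \<alpha> \<beta> D" if "\<alpha> + \<beta> \<noteq> 1" and "is_der \<alpha> \<beta> D" for D
    using is_inner_if_sum_neq_1[OF assms that] .
  show "is_der (1 - \<beta>) \<beta> (dcoc \<beta>)"
    by (simp add: is_der_iff_cocycle fin_supp_dcoc cocycle_dcoc)
  show "\<not> is_inner (1 - \<beta>) \<beta> (dcoc \<beta>)" by (rule dcoc_not_inner)
  assume "\<alpha> + \<beta> = 1"
  then have "\<beta> \<notin> \<int>" using assms by (metis Ints_1 Ints_diff add_diff_cancel_right')
  then show "\<exists>c E. is_inner (1 - \<beta>) \<beta> E \<and> (\<forall>n p. D n p = c * dcoc \<beta> n p + E n p)"
    if "is_der (1 - \<beta>) \<beta> D" for D
    using is_der_eq_dcoc_plus_inner that by blast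
qed

end
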